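(* Let $d\in(0,1]$ and $0<\rho\le d^5/(3^{40}2^5)$, and let $n$ be sufficiently large (e.g. $n\ge 30$). Let $H$ be an $n$-vertex $(\rho,d)$-cherry-dense $3$-graph. Then there is a spanning subgraph $H'$ of $H$ such that: (1) for every pair $S$ of distinct vertices, either $\deg_{H'}(S)\ge dn/3$ or $\deg_{H'}(S)=0$; moreover the number of pairs $S$ with $\deg_{H'}(S)=0$ is at most $\rho^{1/5}\binom n2$ (equivalently $|\partial H'|\ge(1-\rho^{1/5})\binom n2$ when counting unordered pairs); (2) $H'$ is $(\rho^{1/5},d)$-cherry-dense.
   Context: A $3$-graph $H$ has edges that are $3$-element subsets of $V(H)$. For a pair $S=\{x,y\}$ of distinct vertices, $\deg_H(S)=\deg_H(xy)$ is the number of edges of $H$ containing $S$. The shadow of $H$ is $\partial H=\{(x,y):\deg_H(xy)>0\}$. For $\vec G_1,\vec G_2\subseteq V(H)\times V(H)$, let $\mathcal P_2(\vec G_1,\vec G_2)=\{(x,y,z)\in V(H)^3:(x,y)\in\vec G_1,(y,z)\in\vec G_2\}$ and $e_H(\vec G_1,\vec G_2)=|\{(x,y,z)\in\mathcal P_2(\vec G_1,\vec G_2):\{x,y,z\}\in E(H)\}|$. An $n$-vertex $3$-graph $H$ is $(\rho,d)$-cherry-dense if $e_H(\vec G_1,\vec G_2)\ge d|\mathcal P_2(\vec G_1,\vec G_2)|-\rho n^3$ for all $\vec G_1,\vec G_2\subseteq V(H)\times V(H)$. A spanning subgraph $H'$ of $H$ has $V(H')=V(H)$ and $E(H')\subseteq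 E(H)$. *)

theory Defs
  imports Complex_Main
begin

definition is_3graph :: "'a set \<Rightarrow> 'a set set \<Rightarrow> bool" where
  "is_3graph V E \<longleftrightarrow> finite V \<and> (\<forall>e\<in>E. e \<subseteq> V \<and> card e = 3)"

definition deg3 :: "'a set set \<Rightarrow> 'a set \<Rightarrow> nat" where
  "deg3 E S = card {e\<in>E. S \<subseteq> e}"

definition P2 :: "'a set \<Rightarrow> ('a \<times> 'a) set \<Rightarrow> ('a \<times> 'a) set \<Rightarrow> ('a \<times> 'a \<times> 'a) set" where
  "P2 V G1 G2 = {(x,y,z). x \<in> V \<and> y \<in> V \<and> z \<in> V \<and> (x,y) \<in> G1 \<and> (y,z) \<in> G2}"

definition eH :: "'a set \<Rightarrow> 'a set set \<Rightarrow> ('a \<times> 'a) set \<Rightarrow> ('a \<times> 'a) set \<Rightarrow> nat" where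
  "eH V E G1 G2 = card {(x,y,z) \<in> P2 V G1 G2. {x,y,z} \<in> E}"

definition cherry_dense :: "'a set \<Rightarrow> 'a set set \<Rightarrow> real \<Rightarrow> real \<Rightarrow> bool" where
  "cherry_dense V E \<rho> d \<longleftrightarrow>
     (\<forall>G1 G2. G1 \<subseteq> V \<times> V \<longrightarrow> G2 \<subseteq> V \<times> V \<longrightarrow>
        real (eH V E G1 G2) \<ge> d * real (card (P2 V G1 G2)) - \<rho> * real (card V) ^ 3)"

definition pairs :: "'a set \<Rightarrow> 'a set set" where
  "pairs V = {S. S \<subseteq> V \<and> card S = 2}"

end

theory Submission
  imports Defs
begin

text \<open>Let \<open>L\<close> be the set of ordered pairs of distinct vertices of codegree below \<open>dn/2\<close>, and
\<open>B\<close> the set of vertices lying in at least \<open>dn/24\<close> pairs of \<open>L\<close>. Applying cherry-density to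
the cherries whose first leg is in \<open>L\<close> gives \<open>|L| \<le> 2\<rho>n\<^sup>2/d\<close>, hence \<open>|B| \<le> 48\<rho>n/d\<^sup>2\<close>.
Delete every edge containing a vertex of \<open>B\<close> or a pair of \<open>L\<close>. A pair avoiding \<open>B\<close> and \<open>L\<close>
loses at most \<open>|B| + 2dn/24 \<le> dn/6\<close> of its at least \<open>dn/2\<close> edges, every other pair loses all
of them, and only \<open>3|B|n\<^sup>2 + 3|L|n\<close> cherries are destroyed, which the slack
\<open>(root 5 \<rho> - \<rho>) n\<^sup>3\<close> absorbs.\<close>

lemma is_3graph_finite_edges:
  assumes "is_3graph V E"
  shows "finite E"
proof -
  have "E \<subseteq> Pow V" "finite V" using assms by (auto simp: is_3graph_def)
  then show ?thesis by (meson finite_Pow_iff finite_subset)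
qed

lemma card_P2_full:
  assumes "finite V" "G \<subseteq> V \<times> V"
  shows "card (P2 V G (V \<times> V)) = card G * card V"
proof -
  have "P2 V G (V \<times> V) = (\<lambda>((x, y), z). (x, y, z)) ` (G \<times> V)"
    using assms(2) by (force simp: P2_def)
  moreover have "inj_on (\<lambda>((x, y), z). (x, y, z)) (G \<times> V)"
    by (auto simp: inj_on_def)
  ultimately show ?thesis by (simp add: card_image card_cartesian_product)
qed

lemma card_third_vertices_le_deg3:
  assumes "is_3graph V E"
  shows "card {z \<in> V. {a, b, z} \<in> E} \<le> deg3 E {a, b}"
  unfolding deg3_def
proof (rule card_inj_on_le)
  have "z \<notin> {a, b}" if "{a, b, z} \<in> E" for z
  proof
    assume "z \<in> {a, b}"
    then have "card {a, b, z} \<le> 2" by (auto simp: card_insert_le_m1 insert_absorb)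
    with that assms show False by (auto simp: is_3graph_def)
  qed
  then show "inj_on (\<lambda>z. {a, b, z}) {z \<in> V. {a, b, z} \<in> E}"
    by (auto simp: inj_on_def)
  show "(\<lambda>z. {a, b, z}) ` {z \<in> V. {a, b, z} \<in> E} \<subseteq> {e \<in> E. {a, b} \<subseteq> e}" by auto
  show "finite {e \<in> E. {a, b} \<subseteq> e}" using is_3graph_finite_edges[OF assms] by simp
qed

lemma eH_full_le_sum_deg3:
  assumes "is_3graph V E" "G \<subseteq> V \<times> V"
  shows "eH V E G (V \<times> V) \<le> (\<Sum>(x, y)\<in>G. deg3 E {x, y})"
proof -
  have "finite V" using assms(1) by (simp add: is_3graph_def)
  then have "finite G" using assms(2) finite_subset by blast
  have "{(x, y, z) \<in> P2 V G (V \<times> V). {x, y, z} \<in> E}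
      = (\<lambda>((x, y), z). (x, y, z)) ` (SIGMA (x, y):G. {z \<in> V. {x, y, z} \<in> E})"
    using assms(2) by (force simp: P2_def)
  moreover have "inj_on (\<lambda>((x, y), z). (x, y, z)) (SIGMA (x, y):G. {z \<in> V. {x, y, z} \<in> E})"
    by (auto simp: inj_on_def)
  ultimately have "eH V E G (V \<times> V) = (\<Sum>(x, y)\<in>G. card {z \<in> V. {x, y, z} \<in> E})"
    using \<open>finite G\<close> \<open>finite V\<close> by (simp add: eH_def card_image card_SigmaI case_prod_unfold)
  also have "\<dots> \<le> (\<Sum>(x, y)\<in>G. deg3 E {x, y})"
    by (intro sum_mono) (auto intro: card_third_vertices_le_deg3[OF assms(1)])
  finally show ?thesis .
qed

lemma card_low_codegree_pairs_le:
  assumes "cherry_dense V E \<rho> d" "is_3graph V E" "G \<subseteq> V \<times> V"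
    and low: "\<And>x y. (x, y) \<in> G \<Longrightarrow> real (deg3 E {x, y}) \<le> t"
  shows "real (card G) * (d * real (card V) - t) \<le> \<rho> * real (card V) ^ 3"
proof -
  have "finite V" using assms(2) by (simp add: is_3graph_def)
  have "d * real (card (P2 V G (V \<times> V))) - \<rho> * real (card V) ^ 3 \<le> real (eH V E G (V \<times> V))"
    using assms(1,3) unfolding cherry_dense_def by blast
  then have "d * (real (card G) * real (card V)) - \<rho> * real (card V) ^ 3 \<le> real (eH V E G (V \<times> V))"
    by (simp add: card_P2_full[OF \<open>finite V\<close> assms(3)])
  also have "\<dots> \<le> (\<Sum>(x, y)\<in>G. real (deg3 E {x, y}))"
    using eH_full_le_sum_deg3[OF assms(2,3)] by (simp add: case_prod_unfold flip: of_nat_sum)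
  also have "\<dots> \<le> (\<Sum>_\<in>G. t)"
    by (rule sum_mono) (use low in \<open>simp add: case_prod_unfold\<close>)
  finally show ?thesis by (simp add: algebra_simps)
qed

lemma card_high_out_degree_le:
  assumes "finite V" "L \<subseteq> V \<times> V"
  shows "real (card {x \<in> V. s \<le> real (card (L `` {x}))}) * s \<le> real (card L)"
proof -
  let ?H = "{x \<in> V. s \<le> real (card (L `` {x}))}"
  have fin: "finite (L `` {x})" for x
    using assms finite_subset[of "L `` {x}" V] by auto
  have "real (card ?H) * s = (\<Sum>x\<in>?H. s)" by simp
  also have "\<dots> \<le> (\<Sum>x\<in>?H. real (card (L `` {x})))" by (rule sum_mono) simp
  also have "\<dots> \<le> (\<Sum>x\<in>V. real (card (L `` {x})))" by (rule sum_mono2) (use assms(1) in auto)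
  also have "\<dots> = real (card (SIGMA x:V. L `` {x}))"
    using assms(1) fin by (simp add: card_SigmaI)
  also have "(SIGMA x:V. L `` {x}) = L" using assms(2) by auto
  finally show ?thesis .
qed

definition prune_edges :: "'a set set \<Rightarrow> 'a set \<Rightarrow> ('a \<times> 'a) set \<Rightarrow> 'a set set" where
  "prune_edges E B L = {e \<in> E. e \<inter> B = {} \<and> (\<forall>u\<in>e. \<forall>v\<in>e. u \<noteq> v \<longrightarrow> (u, v) \<notin> L)}"

lemma prune_edges_subset: "prune_edges E B L \<subseteq> E"
  by (auto simp: prune_edges_def)

lemma deg3_prune_edges_eq_0:
  assumes "x \<noteq> y" "x \<in> B \<or> y \<in> B \<or> (x, y) \<in> L"
  shows "deg3 (prune_edges E B L) {x, y} = 0"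
proof -
  have "{e \<in> prune_edges E B L. {x, y} \<subseteq> e} = {}"
    using assms by (auto simp: prune_edges_def)
  then show ?thesis unfolding deg3_def by (simp only: card.empty)
qed

lemma card_Un3_le: "card (A \<union> B \<union> C) \<le> card A + card B + card C"
  by (intro order_trans[OF card_Un_le] add_right_mono) simp

lemma deg3_le_deg3_prune_edges:
  assumes "is_3graph V E" "B \<subseteq> V" "L \<subseteq> V \<times> V" "sym L"
    and "x \<noteq> y" "x \<notin> B" "y \<notin> B" "(x, y) \<notin> L"
  shows "deg3 E {x, y} \<le> deg3 (prune_edges E B L) {x, y} + card B + card (L `` {x}) + card (L `` {y})"
proof -
  have "finite V" using assms(1) by (simp add: is_3graph_def)
  moreover have "L `` {v} \<subseteq> V" for v using assms(3) by auto
  ultimately have fin: "finite B" "finite (L `` {x})" "finite (L `` {y})"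
    using assms(2) finite_subset by metis+
  let ?W = "B \<union> L `` {x} \<union> L `` {y}"
  have "{e \<in> E. {x, y} \<subseteq> e} \<subseteq> {e \<in> prune_edges E B L. {x, y} \<subseteq> e} \<union> (\<lambda>z. {x, y, z}) ` ?W"
  proof
    fix e assume e: "e \<in> {e \<in> E. {x, y} \<subseteq> e}"
    then have "card e = 3" using assms(1) by (simp add: is_3graph_def)
    then have "finite e" by (metis card.infinite zero_neq_numeral)
    then have "card (e - {x, y}) = 1" using e assms(5) \<open>card e = 3\<close> by (simp add: card_Diff_subset)
    then obtain z where z: "e - {x, y} = {z}" by (rule card_1_singletonE)
    then have e_eq: "e = {x, y, z}" using e by auto
    show "e \<in> {e \<in> prune_edges E B L. {x, y} \<subseteq> e} \<union> (\<lambda>z. {x, y, z}) ` ?W"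
    proof (cases "z \<in> ?W")
      case True
      then show ?thesis using e_eq by blast
    next
      case False
      then have "e \<in> prune_edges E B L"
        using e e_eq assms(4-8) unfolding prune_edges_def by (auto dest: symD)
      then show ?thesis using e by simp
    qed
  qed
  then have "deg3 E {x, y} \<le> card ({e \<in> prune_edges E B L. {x, y} \<subseteq> e} \<union> (\<lambda>z. {x, y, z}) ` ?W)"
    unfolding deg3_def using is_3graph_finite_edges[OF assms(1)] fin
    by (intro card_mono) (auto simp: prune_edges_def)
  also have "\<dots> \<le> deg3 (prune_edges E B L) {x, y} + card ?W"
    unfolding deg3_def by (intro order_trans[OF card_Un_le] add_left_mono card_image_le) (use fin in simp)
  also have "card ?W \<le> card B + card (L `` {x}) + card (L `` {y})" by (rule card_Un3_le)
  finally show ?thesis by simp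
qed

lemma card_triples_meeting_le:
  assumes "finite V" "B \<subseteq> V" "L \<subseteq> V \<times> V"
  shows "card {(x, y, z) \<in> V \<times> V \<times> V.
           x \<in> B \<or> y \<in> B \<or> z \<in> B \<or> (x, y) \<in> L \<or> (y, z) \<in> L \<or> (x, z) \<in> L}
           \<le> 3 * card B * card V ^ 2 + 3 * card L * card V"
    (is "card ?T \<le> _")
proof -
  have fin: "finite B" "finite L" using assms finite_subset by (metis finite_SigmaI)+
  let ?TB = "B \<times> V \<times> V \<union> V \<times> B \<times> V \<union> V \<times> V \<times> B"
  let ?TL = "(\<lambda>((x, y), z). (x, y, z)) ` (L \<times> V) \<union> V \<times> L \<union> (\<lambda>((x, z), y). (x, y, z)) ` (L \<times> V)"
  have "?T \<subseteq> ?TB \<union> ?TL" by (force simp: image_iff)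
  then have "card ?T \<le> card ?TB + card ?TL"
    using assms(1) fin by (intro order_trans[OF card_mono card_Un_le]) auto
  also have "card ?TB \<le> 3 * card B * card V ^ 2"
    using card_Un3_le[of "B \<times> V \<times> V" "V \<times> B \<times> V" "V \<times> V \<times> B"]
    by (simp add: card_cartesian_product power2_eq_square algebra_simps)
  also have "card ?TL \<le> 3 * card L * card V"
  proof -
    have "card ((\<lambda>((x, y), z). (x, y, z)) ` (L \<times> V)) \<le> card L * card V"
      "card ((\<lambda>((x, z), y). (x, y, z)) ` (L \<times> V)) \<le> card L * card V"
      "card (V \<times> L) = card L * card V"
      using card_image_le[of "L \<times> V"] assms(1) fin by (auto simp: card_cartesian_product)
    then show ?thesis
      using card_Un3_le[of "(\<lambda>((x, y), z). (x, y, z)) ` (L \<times> V)" "V \<times> L"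
          "(\<lambda>((x, z), y). (x, y, z)) ` (L \<times> V)"]
      by linarith
  qed
  finally show ?thesis by simp
qed

lemma eH_le_eH_prune_edges:
  assumes "finite V" "B \<subseteq> V" "L \<subseteq> V \<times> V" "sym L"
  shows "eH V E G1 G2 \<le> eH V (prune_edges E B L) G1 G2 + 3 * card B * card V ^ 2 + 3 * card L * card V"
proof -
  let ?T = "{(x, y, z) \<in> V \<times> V \<times> V.
    x \<in> B \<or> y \<in> B \<or> z \<in> B \<or> (x, y) \<in> L \<or> (y, z) \<in> L \<or> (x, z) \<in> L}"
  have "P2 V G1 G2 \<subseteq> V \<times> V \<times> V" by (auto simp: P2_def)
  then have fin: "finite {(x, y, z) \<in> P2 V G1 G2. {x, y, z} \<in> prune_edges E B L}" "finite ?T"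
    using assms(1) finite_subset by (fastforce intro: finite_subset[of _ "V \<times> V \<times> V"])+
  have "{(x, y, z) \<in> P2 V G1 G2. {x, y, z} \<in> E}
      \<subseteq> {(x, y, z) \<in> P2 V G1 G2. {x, y, z} \<in> prune_edges E B L} \<union> ?T"
    using assms(4) by (auto simp: P2_def prune_edges_def dest: symD)
  then have "eH V E G1 G2 \<le> eH V (prune_edges E B L) G1 G2 + card ?T"
    unfolding eH_def using fin by (intro order_trans[OF card_mono card_Un_le]) auto
  then show ?thesis using card_triples_meeting_le[OF assms(1-3)] by linarith
qed

lemma le_of_mult_power_le:
  fixes x r d m :: real and k :: nat
  assumes "0 < r" "13122 * r \<le> d" "d \<le> 1" "0 \<le> m" "0 \<le> x" "1 \<le> k" "k \<le> 4"
    and "x * d ^ k \<le> 48 * r ^ 5 * m"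
  shows "x \<le> r * m / 12"
proof -
  have "x * 13122 ^ k * r ^ k = x * (13122 * r) ^ k" by (simp add: power_mult_distrib)
  also have "\<dots> \<le> x * d ^ k" using assms(1,2,5) by (intro mult_left_mono power_mono) auto
  also have "\<dots> \<le> 48 * r ^ (5 - k) * m * r ^ k"
  proof -
    have "r ^ 5 = r ^ (5 - k) * r ^ k" using assms(7) by (simp flip: power_add)
    then show ?thesis using assms(8) by (simp add: algebra_simps)
  qed
  finally have power_le: "x * 13122 ^ k \<le> 48 * r ^ (5 - k) * m" using assms(1) by simp
  have "x * 13122 \<le> x * 13122 ^ k"
    using assms(5,6) by (intro mult_left_mono) (auto simp: power_increasing[of 1 k, simplified])
  also have "\<dots> \<le> 48 * r ^ (5 - k) * m" by (rule power_le)
  also have "\<dots> \<le> 48 * r * m"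
    using power_decreasing[of 1 "5 - k" r] assms(1-4,7) by (simp add: mult_right_mono)
  finally have "x * 13122 \<le> 48 * r * m" .
  moreover have "0 \<le> r * m" using assms(1,4) by simp
  ultimately show ?thesis by linarith
qed

lemma pruning_budget:
  fixes r d n l b :: real
  assumes "0 < r" "13122 * r \<le> d" "d \<le> 1" "0 < n" "0 \<le> b"
    and low: "l * (d * n - d * n / 2) \<le> r ^ 5 * n ^ 3"
    and heavy: "b * (d * n / 24) \<le> l"
  shows "l \<le> r * n ^ 2 / 12" "b \<le> r * n / 12"
proof -
  have "0 < d" using assms(1,2) by simp
  have "0 \<le> b * (d * n / 24)" using assms(4,5) \<open>0 < d\<close> by simp
  with heavy have "0 \<le> l" by linarith
  have "(l * d) * n \<le> (2 * r ^ 5 * n ^ 2) * n"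
    using low by (simp add: power2_eq_square power3_eq_cube algebra_simps)
  then have l_d: "l * d \<le> 2 * r ^ 5 * n ^ 2" using assms(4) by simp
  have "b * (d * n / 24) * d \<le> l * d"
    using heavy \<open>0 < d\<close> by (simp add: mult_right_mono del: times_divide_eq_left)
  then have "(b * d ^ 2) * n \<le> 24 * (l * d)" by (simp add: power2_eq_square algebra_simps)
  also have "\<dots> \<le> (48 * r ^ 5 * n) * n" using l_d by (simp add: power2_eq_square mult_ac)
  finally have "(b * d ^ 2) * n \<le> (48 * r ^ 5 * n) * n" .
  then have "b * d ^ 2 \<le> 48 * r ^ 5 * n" using assms(4) by simp
  then show "b \<le> r * n / 12"
    using le_of_mult_power_le[of r d n b 2] assms by simp
  have "0 \<le> r ^ 5 * n ^ 2" using assms(1) by simp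
  then have "l * d ^ 1 \<le> 48 * r ^ 5 * n ^ 2" using l_d by simp
  then show "l \<le> r * n ^ 2 / 12"
    using le_of_mult_power_le[of r d "n ^ 2" l 1] assms \<open>0 \<le> l\<close> by simp
qed

lemma card_pairs_covered_le:
  assumes "finite V" "B \<subseteq> V" "L \<subseteq> V \<times> V"
    and covered: "\<And>x y. x \<in> V \<Longrightarrow> y \<in> V \<Longrightarrow> x \<noteq> y \<Longrightarrow> P {x, y}
      \<Longrightarrow> x \<in> B \<or> y \<in> B \<or> (x, y) \<in> L"
  shows "card {S \<in> pairs V. P S} \<le> card B * card V + card L"
proof -
  let ?f = "\<lambda>(x, y). {x, y}"
  have fin: "finite (B \<times> V)" "finite L"
    using assms(1-3) finite_subset by (metis finite_SigmaI)+
  have "{S \<in> pairs V. P S} \<subseteq> ?f ` (B \<times> V) \<union> ?f ` L"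
  proof
    fix S assume "S \<in> {S \<in> pairs V. P S}"
    then obtain x y where S: "S = {x, y}" "x \<noteq> y" "x \<in> V" "y \<in> V" "P {x, y}"
      by (auto simp: pairs_def card_2_iff)
    then consider "x \<in> B" | "y \<in> B" | "(x, y) \<in> L" using covered by blast
    then show "S \<in> ?f ` (B \<times> V) \<union> ?f ` L"
    proof cases
      case 2
      then have "(y, x) \<in> B \<times> V" using S by simp
      then show ?thesis using S by (auto simp: image_iff insert_commute)
    qed (use S in \<open>force simp: image_iff\<close>)+
  qed
  then have "card {S \<in> pairs V. P S} \<le> card (?f ` (B \<times> V)) + card (?f ` L)"
    using fin by (intro order_trans[OF card_mono card_Un_le]) auto
  also have "\<dots> \<le> card (B \<times> V) + card L"
    using fin by (intro add_mono card_image_le)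
  finally show ?thesis by (simp add: card_cartesian_product)
qed

lemma real_choose_two: "real (n choose 2) = real n * (real n - 1) / 2"
  by (cases n) (auto simp: choose_two field_char_0_class.of_nat_div mod_eq_0_iff_dvd algebra_simps)

locale cherry_dense_pruning =
  fixes V :: "'a set" and E :: "'a set set" and n :: nat and d r :: real
  assumes graph: "is_3graph V E" and card_V: "card V = n" and n_ge_2: "2 \<le> n"
    and dense: "cherry_dense V E (r ^ 5) d"
    and r_pos: "0 < r" and r_le: "13122 * r \<le> d" and d_le: "d \<le> 1"
begin

definition low_pairs :: "('a \<times> 'a) set" where
  "low_pairs = {(x, y) \<in> V \<times> V. x \<noteq> y \<and> real (deg3 E {x, y}) < d * n / 2}"

definition heavy_vertices :: "'a set" where
  "heavy_vertices = {x \<in> V. d * n / 24 \<le> real (card (low_pairs `` {x}))}"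

definition pruned :: "'a set set" where
  "pruned = prune_edges E heavy_vertices low_pairs"

lemma finite_V: "finite V"
  using graph by (simp add: is_3graph_def)

lemma n_pos: "0 < real n"
  using n_ge_2 by simp

lemma low_pairs_subset: "low_pairs \<subseteq> V \<times> V"
  by (auto simp: low_pairs_def)

lemma heavy_vertices_subset: "heavy_vertices \<subseteq> V"
  by (auto simp: heavy_vertices_def)

lemma sym_low_pairs: "sym low_pairs"
  by (auto simp: low_pairs_def sym_def insert_commute)

lemma card_low_pairs_le: "real (card low_pairs) \<le> r * real n ^ 2 / 12"
  and card_heavy_vertices_le: "real (card heavy_vertices) \<le> r * n / 12"
proof -
  have "real (deg3 E {x, y}) \<le> d * n / 2" if "(x, y) \<in> low_pairs" for x y
    using that by (simp add: low_pairs_def)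
  from card_low_codegree_pairs_le[OF dense graph low_pairs_subset this]
  have "real (card low_pairs) * (d * n - d * n / 2) \<le> r ^ 5 * real n ^ 3"
    by (simp add: card_V)
  moreover have "real (card heavy_vertices) * (d * n / 24) \<le> real (card low_pairs)"
    unfolding heavy_vertices_def by (rule card_high_out_degree_le[OF finite_V low_pairs_subset])
  ultimately show "real (card low_pairs) \<le> r * real n ^ 2 / 12" "real (card heavy_vertices) \<le> r * n / 12"
    using pruning_budget[OF r_pos r_le d_le n_pos of_nat_0_le_iff] by blast+
qed

lemma deg3_pruned_eq_0:
  assumes "x \<noteq> y" "x \<in> heavy_vertices \<or> y \<in> heavy_vertices \<or> (x, y) \<in> low_pairs"
  shows "deg3 pruned {x, y} = 0"
  unfolding pruned_def using assms by (rule deg3_prune_edges_eq_0)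

lemma deg3_pruned_ge:
  assumes "x \<in> V" "y \<in> V" "x \<noteq> y"
    and "x \<notin> heavy_vertices" "y \<notin> heavy_vertices" "(x, y) \<notin> low_pairs"
  shows "d * n / 3 \<le> real (deg3 pruned {x, y})"
proof -
  have "d * n / 2 \<le> real (deg3 E {x, y})" using assms by (auto simp: low_pairs_def)
  moreover have "r * n \<le> d * n" using r_le r_pos n_pos by (intro mult_right_mono) auto
  then have "real (card heavy_vertices) \<le> d * n / 12" using card_heavy_vertices_le by linarith
  moreover have "real (card (low_pairs `` {x})) < d * n / 24" "real (card (low_pairs `` {y})) < d * n / 24"
    using assms by (auto simp: heavy_vertices_def)
  ultimately show ?thesis
    using deg3_le_deg3_prune_edges[OF graph heavy_vertices_subset low_pairs_subset sym_low_pairs assms(3-6)]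
    unfolding pruned_def by linarith
qed

lemma deg3_pruned_dichotomy:
  assumes "S \<in> pairs V"
  shows "d * n / 3 \<le> real (deg3 pruned S) \<or> deg3 pruned S = 0"
proof -
  obtain x y where "S = {x, y}" "x \<noteq> y" "x \<in> V" "y \<in> V"
    using assms by (auto simp: pairs_def card_2_iff)
  then show ?thesis
    using deg3_pruned_ge[of x y] deg3_pruned_eq_0[of x y] by fastforce
qed

lemma card_isolated_pairs_le: "real (card {S \<in> pairs V. deg3 pruned S = 0}) \<le> r * real (n choose 2)"
proof -
  have "0 < d * n / 3" using r_le r_pos n_pos by simp
  then have "card {S \<in> pairs V. deg3 pruned S = 0} \<le> card heavy_vertices * card V + card low_pairs"
    by (intro card_pairs_covered_le[OF finite_V heavy_vertices_subset low_pairs_subset])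
      (use deg3_pruned_ge in fastforce)
  then have "real (card {S \<in> pairs V. deg3 pruned S = 0}) \<le> real (card heavy_vertices) * n + real (card low_pairs)"
    using card_V by (metis of_nat_add of_nat_le_iff of_nat_mult)
  also have "\<dots> \<le> r * n / 12 * n + r * real n ^ 2 / 12"
    using card_heavy_vertices_le card_low_pairs_le n_pos by (intro add_mono mult_right_mono) auto
  also have "\<dots> = r * (real n ^ 2 / 6)" by (simp add: power2_eq_square)
  also have "\<dots> \<le> r * real (n choose 2)"
    using n_ge_2 r_pos by (intro mult_left_mono) (auto simp: real_choose_two power2_eq_square)
  finally show ?thesis .
qed

lemma cherry_loss_le:
  "3 * real (card heavy_vertices) * real n ^ 2 + 3 * real (card low_pairs) * n + r ^ 5 * real n ^ 3
     \<le> r * real n ^ 3"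
proof -
  have "r ^ 4 \<le> r ^ 1" using r_pos r_le d_le by (intro power_decreasing) auto
  then have "r ^ 4 \<le> 1 / 2" using r_le d_le by simp
  then have "r * r ^ 4 \<le> r * (1 / 2)" using r_pos by (intro mult_left_mono) auto
  then have "r ^ 5 \<le> r / 2" by (simp add: eval_nat_numeral)
  then have "r ^ 5 * real n ^ 3 \<le> r / 2 * real n ^ 3" by (rule mult_right_mono) simp
  moreover have "3 * real (card heavy_vertices) * real n ^ 2 \<le> 3 * (r * n / 12) * real n ^ 2"
    "3 * real (card low_pairs) * n \<le> 3 * (r * real n ^ 2 / 12) * n"
    using mult_right_mono[OF card_heavy_vertices_le, of "real n ^ 2"]
      mult_right_mono[OF card_low_pairs_le, of "real n"]
    by simp_all
  moreover have "3 * (r * n / 12) * real n ^ 2 + 3 * (r * real n ^ 2 / 12) * n + r / 2 * real n ^ 3 = r * real n ^ 3"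
    by (simp add: power2_eq_square power3_eq_cube field_simps)
  ultimately show ?thesis by linarith
qed

lemma cherry_dense_pruned: "cherry_dense V pruned r d"
  unfolding cherry_dense_def
proof (intro allI impI)
  fix G1 G2 assume "G1 \<subseteq> V \<times> V" "G2 \<subseteq> V \<times> V"
  then have "d * real (card (P2 V G1 G2)) - r ^ 5 * real (card V) ^ 3 \<le> real (eH V E G1 G2)"
    using dense unfolding cherry_dense_def by blast
  moreover have "eH V E G1 G2 \<le> eH V pruned G1 G2 + 3 * card heavy_vertices * n ^ 2 + 3 * card low_pairs * n"
    using eH_le_eH_prune_edges[OF finite_V heavy_vertices_subset low_pairs_subset sym_low_pairs] card_V
    by (simp add: pruned_def)
  then have "real (eH V E G1 G2)
      \<le> real (eH V pruned G1 G2 + 3 * card heavy_vertices * n ^ 2 + 3 * card low_pairs * n)"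
    by (simp only: of_nat_le_iff)
  ultimately show "d * real (card (P2 V G1 G2)) - r * real (card V) ^ 3 \<le> real (eH V pruned G1 G2)"
    unfolding card_V using cherry_loss_le by simp
qed

end

text \<open>Since \<open>13122 = 2 * 3\<^sup>8\<close>, the hypothesis \<open>\<rho> \<le> d\<^sup>5 / (3\<^sup>4\<^sup>0 * 2\<^sup>5)\<close> of the theorem says
  exactly \<open>13122 * root 5 \<rho> \<le> d\<close>; this is the form the pruning argument uses.\<close>

lemma root5_le_of_le_pow5:
  fixes d \<rho> :: real
  assumes "0 \<le> d" "\<rho> \<le> d ^ 5 / (3 ^ 40 * 2 ^ 5)"
  shows "13122 * root 5 \<rho> \<le> d"
proof -
  have "\<rho> \<le> (d / 13122) ^ 5" using assms(2) by (simp add: power_divide)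
  then show ?thesis
    using real_root_le_mono[of 5 \<rho> "(d / 13122) ^ 5"] assms(1) by (simp add: real_root_pos2)
qed

theorem lemma2p2:
  fixes V :: "'a set" and E :: "'a set set" and n :: nat and d \<rho> :: real
  assumes "0 < d" and "d \<le> 1"
    and "0 < \<rho>" and "\<rho> \<le> d ^ 5 / (3 ^ 40 * 2 ^ 5)"
    and "n \<ge> 30"
    and "is_3graph V E" and "card V = n"
    and "cherry_dense V E \<rho> d"
  shows "\<exists>E'. E' \<subseteq> E \<and>
           (\<forall>S\<in>pairs V. real (deg3 E' S) \<ge> d * real n / 3 \<or> deg3 E' S = 0) \<and>
           real (card {S\<in>pairs V. deg3 E' S = 0}) \<le> root 5 \<rho> * real (n choose 2) \<and>
           cherry_dense V E' (root 5 \<rho>) d"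
proof -
  interpret cherry_dense_pruning V E n d "root 5 \<rho>"
  proof
    show "cherry_dense V E (root 5 \<rho> ^ 5) d" using assms(3,8) by simp
    show "13122 * root 5 \<rho> \<le> d" using assms(1,4) by (intro root5_le_of_le_pow5) auto
  qed (use assms in auto)
  show ?thesis
    using deg3_pruned_dichotomy card_isolated_pairs_le cherry_dense_pruned
    by (intro exI[of _ pruned]) (simp add: pruned_def prune_edges_subset)
qed

end
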